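(* Let $\mathbb F$ be a field and $G,F_1,\dots,F_m\in\mathbb F[x_1,\dots,x_n]$. If there is an RIPS-certificate that $G$ is in the radical of the ideal generated by $F_1,\dots,F_m$, then $G$ is in fact in $\sqrt{\langle F_1,\dots,F_m\rangle}$.
   Context: An RIPS (rational Ideal Proof System) certificate that $G$ is in the radical of the $\overline{\mathbb F}[\vec x]$-ideal generated by $F_1,\dots,F_m$ is a rational function $C(\vec x,\vec y)$ in $\vec x$ and placeholder variables $y_1,\dots,y_m$ such that: (0) writing $C=C'/D$ with $C',D$ relatively prime polynomials, $1/D(\vec x,F_1(\vec x),\dots,F_m(\vec x))$ lies in the localization of the polynomial ring at the union of the prime ideals minimal over $\langle F_1,\dots,F_m\rangle$ — equivalently, if $G$ is an invertible constant then $D$ is an invertible constant, and otherwise $D(\vec x,\vec F(\vec x))$ does not vanish identically on any irreducible component (over $\overline{\mathbb F}$) of the algebraic set $V(F_1,\dots,F_m)\subseteq\overline{\mathbb F}^n$; (1) $C(\vec x,\vec0)=0$; (2) $C(\vec x,F_1(\vec x),\dots,F_m(\vec x))=G(\vec x)$. *)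

theory Defs
  imports "HOL-Library.Poly_Mapping" "HOL-Algebra.Algebraic_Closure_Type"
begin

type_synonym ('v, 'a) mpoly = "('v \<Rightarrow>\<^sub>0 nat) \<Rightarrow>\<^sub>0 'a"

definition vars :: "('v, 'a::zero) mpoly \<Rightarrow> 'v set" where
  "vars p = \<Union> (Poly_Mapping.keys ` Poly_Mapping.keys p)"

definition polys_in :: "'v set \<Rightarrow> ('v, 'a::zero) mpoly set" where
  "polys_in V = {p. vars p \<subseteq> V}"

definition Var :: "'v \<Rightarrow> ('v, 'a::{zero,one}) mpoly" where
  "Var v = Poly_Mapping.single (Poly_Mapping.single v 1) 1"

definition Const :: "'a::zero \<Rightarrow> ('v, 'a) mpoly" where
  "Const c = Poly_Mapping.single 0 c"

definition subst :: "('v \<Rightarrow> ('w, 'a::comm_ring_1) mpoly) \<Rightarrow> ('v, 'a) mpoly \<Rightarrow> ('w, 'a) mpoly" where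
  "subst \<sigma> p = (\<Sum>mon\<in>Poly_Mapping.keys p. Const (Poly_Mapping.lookup p mon) * (\<Prod>v\<in>Poly_Mapping.keys mon. \<sigma> v ^ Poly_Mapping.lookup mon v))"

definition map_coeffs :: "('a::zero \<Rightarrow> 'b::zero) \<Rightarrow> ('v, 'a) mpoly \<Rightarrow> ('v, 'b) mpoly" where
  "map_coeffs f p = Poly_Mapping.map f p"

text \<open>Ideals inside the subring R (intended: R = polynomials in x_0..x_{n-1}).\<close>
definition ideal_gen :: "('v, 'a::comm_ring_1) mpoly set \<Rightarrow> (nat \<Rightarrow> ('v, 'a) mpoly) \<Rightarrow> nat \<Rightarrow> ('v, 'a) mpoly set" where
  "ideal_gen R Fs m = {\<Sum>i<m. h i * Fs i | h. \<forall>i<m. h i \<in> R}"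

definition in_radical :: "('v, 'a::comm_ring_1) mpoly set \<Rightarrow> (nat \<Rightarrow> ('v, 'a) mpoly) \<Rightarrow> nat \<Rightarrow> ('v, 'a) mpoly \<Rightarrow> bool" where
  "in_radical R Fs m G \<longleftrightarrow> (\<exists>k. G ^ k \<in> ideal_gen R Fs m)"

definition is_ideal_in :: "'r::comm_ring_1 set \<Rightarrow> 'r set \<Rightarrow> bool" where
  "is_ideal_in R I \<longleftrightarrow> I \<subseteq> R \<and> 0 \<in> I \<and> (\<forall>a\<in>I. \<forall>b\<in>I. a + b \<in> I) \<and> (\<forall>r\<in>R. \<forall>a\<in>I. r * a \<in> I)"

definition prime_ideal_in :: "'r::comm_ring_1 set \<Rightarrow> 'r set \<Rightarrow> bool" where
  "prime_ideal_in R P \<longleftrightarrow> is_ideal_in R P \<and> 1 \<notin> P \<and>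
     (\<forall>a\<in>R. \<forall>b\<in>R. a * b \<in> P \<longrightarrow> a \<in> P \<or> b \<in> P)"

definition minimal_prime_over :: "'r::comm_ring_1 set \<Rightarrow> 'r set \<Rightarrow> 'r set \<Rightarrow> bool" where
  "minimal_prime_over R I P \<longleftrightarrow> prime_ideal_in R P \<and> I \<subseteq> P \<and>
     (\<forall>Q. prime_ideal_in R Q \<and> I \<subseteq> Q \<and> Q \<subseteq> P \<longrightarrow> Q = P)"

definition rel_prime :: "'r::comm_semiring_1 \<Rightarrow> 'r \<Rightarrow> bool" where
  "rel_prime a b \<longleftrightarrow> (\<forall>c. c dvd a \<longrightarrow> c dvd b \<longrightarrow> c dvd 1)"

definition nonzero_const :: "('v, 'a::zero) mpoly \<Rightarrow> bool" where
  "nonzero_const p \<longleftrightarrow> (\<exists>c. c \<noteq> 0 \<and> p = Const c)"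

text \<open>RIPS certificate C = C'/D, with C', D polynomials in x_0..x_{n-1} (Inl i) and
  placeholder variables y_0..y_{m-1} (Inr j) over the coefficient field 'b (= algebraic
  closure), certifying that G lies in the radical of the ideal generated by F_0..F_{m-1}
  in 'b[x_0..x_{n-1}].\<close>
definition RIPS_certificate ::
  "nat \<Rightarrow> nat \<Rightarrow> (nat \<Rightarrow> (nat, 'b::field) mpoly) \<Rightarrow> (nat, 'b) mpoly
     \<Rightarrow> (nat + nat, 'b) mpoly \<Rightarrow> (nat + nat, 'b) mpoly \<Rightarrow> bool" where
  "RIPS_certificate n m F G C' D \<longleftrightarrow>
     (let R = polys_in {..<n};
          \<sigma>F = (\<lambda>v. case v of Inl i \<Rightarrow> Var i | Inr j \<Rightarrow> F j);
          \<sigma>0 = (\<lambda>v. case v of Inl i \<Rightarrow> Var i | Inr j \<Rightarrow> 0)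
      in C' \<in> polys_in (Inl ` {..<n} \<union> Inr ` {..<m}) \<and>
         D \<in> polys_in (Inl ` {..<n} \<union> Inr ` {..<m}) \<and>
         D \<noteq> 0 \<and> rel_prime C' D \<and>
         \<comment> \<open>(0)\<close>
         (nonzero_const G \<longrightarrow> nonzero_const D) \<and>
         (\<not> nonzero_const G \<longrightarrow>
            (\<forall>P. minimal_prime_over R (ideal_gen R F m) P \<longrightarrow> subst \<sigma>F D \<notin> P)) \<and>
         \<comment> \<open>(1): C(x,0) is defined and equals 0\<close>
         subst \<sigma>0 D \<noteq> 0 \<and> subst \<sigma>0 C' = 0 \<and>
         \<comment> \<open>(2): C(x,F(x)) is defined and equals G\<close>
         subst \<sigma>F D \<noteq> 0 \<and> subst \<sigma>F C' = G * subst \<sigma>F D)"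

end

(* Substituting y_j := F_j and y_j := 0 in C' gives values that are congruent modulo
   I = <F_1, ..., F_m>, because the substituted tuples are; as C'(x, 0) = 0, condition (2)
   puts G * D(x, F) into I. Condition (0) says that D(x, F) lies in no minimal prime over I.
   If no power of G were in I, Krull's argument would give a prime P containing I but not G,
   and Zorn's lemma a minimal prime Q over I inside P; then G * D(x, F) is in Q while
   neither factor is, contradicting primality of Q. *)

theory Submission
  imports Defs
begin

section \<open>Subrings and ideals\<close>

definition is_subring :: "'r::comm_ring_1 set \<Rightarrow> bool" where
  "is_subring R \<longleftrightarrow> 0 \<in> R \<and> 1 \<in> R \<and> (\<forall>a\<in>R. \<forall>b\<in>R. a + b \<in> R \<and> a * b \<in> R) \<and> (\<forall>a\<in>R. - a \<in> R)"

lemma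
  assumes "is_subring R"
  shows subring_zero: "0 \<in> R" and subring_one: "1 \<in> R"
    and subring_add: "a \<in> R \<Longrightarrow> b \<in> R \<Longrightarrow> a + b \<in> R"
    and subring_mult: "a \<in> R \<Longrightarrow> b \<in> R \<Longrightarrow> a * b \<in> R"
  using assms unfolding is_subring_def by auto

lemma
  assumes "is_ideal_in R I"
  shows ideal_in_subset: "I \<subseteq> R" and ideal_in_zero: "0 \<in> I"
    and ideal_in_add: "a \<in> I \<Longrightarrow> b \<in> I \<Longrightarrow> a + b \<in> I"
    and ideal_in_mult: "r \<in> R \<Longrightarrow> a \<in> I \<Longrightarrow> r * a \<in> I"
  using assms unfolding is_ideal_in_def by auto

lemma subring_sum: "is_subring R \<Longrightarrow> (\<And>x. x \<in> S \<Longrightarrow> f x \<in> R) \<Longrightarrow> sum f S \<in> R"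
  by (induction S rule: infinite_finite_induct) (auto intro: subring_zero subring_add)

lemma subring_prod: "is_subring R \<Longrightarrow> (\<And>x. x \<in> S \<Longrightarrow> f x \<in> R) \<Longrightarrow> prod f S \<in> R"
  by (induction S rule: infinite_finite_induct) (auto intro: subring_one subring_mult)

lemma subring_power: "is_subring R \<Longrightarrow> x \<in> R \<Longrightarrow> x ^ k \<in> R"
  by (induction k) (auto intro: subring_one subring_mult)

lemma ideal_sum: "is_ideal_in R I \<Longrightarrow> (\<And>x. x \<in> S \<Longrightarrow> f x \<in> I) \<Longrightarrow> sum f S \<in> I"
  by (induction S rule: infinite_finite_induct) (auto intro: ideal_in_zero ideal_in_add)

lemma ideal_prod_diff:
  assumes R: "is_subring R" and I: "is_ideal_in R I"
    and fg: "\<And>x. x \<in> S \<Longrightarrow> f x \<in> R \<and> g x \<in> R \<and> f x - g x \<in> I"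
  shows "prod f S - prod g S \<in> I"
  using fg
proof (induction S rule: infinite_finite_induct)
  case (insert x S)
  have "prod g S \<in> R" by (rule subring_prod[OF R]) (use insert.prems in auto)
  moreover have "f x \<in> R" "f x - g x \<in> I" using insert.prems by auto
  moreover have "prod f S - prod g S \<in> I" by (rule insert.IH) (use insert.prems in auto)
  ultimately have "f x * (prod f S - prod g S) + prod g S * (f x - g x) \<in> I"
    by (intro ideal_in_add[OF I] ideal_in_mult[OF I])
  moreover have "prod f (insert x S) - prod g (insert x S)
      = f x * (prod f S - prod g S) + prod g S * (f x - g x)"
    using insert.hyps by (simp add: algebra_simps)
  ultimately show ?case by simp
qed (simp_all add: ideal_in_zero[OF I])

lemma ideal_power_diff:
  assumes "is_subring R" "is_ideal_in R I" "a \<in> R" "b \<in> R" "a - b \<in> I"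
  shows "a ^ k - b ^ k \<in> I"
  using ideal_prod_diff[OF assms(1,2), of "{..<k}" "\<lambda>_. a" "\<lambda>_. b"] assms(3-5) by simp

section \<open>Prime ideals and Zorn's lemma\<close>

lemma subset_Zorn_nonempty_dual:
  assumes "A \<noteq> {}" and ch: "\<And>C. C \<noteq> {} \<Longrightarrow> subset.chain A C \<Longrightarrow> \<Inter>C \<in> A"
  shows "\<exists>M\<in>A. \<forall>Z\<in>A. Z \<subseteq> M \<longrightarrow> Z = M"
proof -
  have "\<exists>M\<in>uminus ` A. \<forall>Z\<in>uminus ` A. M \<subseteq> Z \<longrightarrow> Z = M"
  proof (rule subset_Zorn_nonempty)
    show "uminus ` A \<noteq> {}" using assms(1) by simp
  next
    fix C assume "C \<noteq> {}" "subset.chain (uminus ` A) C"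
    then have "uminus ` C \<noteq> {}" "subset.chain A (uminus ` C)"
      by (auto simp: subset_chain_def)
    then have "\<Inter>(uminus ` C) \<in> A" by (rule ch)
    moreover have "\<Union>C = - \<Inter>(uminus ` C)" by auto
    ultimately show "\<Union>C \<in> uminus ` A" by (rule rev_image_eqI)
  qed
  then obtain M where "M \<in> A" and max: "\<And>Z. Z \<in> A \<Longrightarrow> - M \<subseteq> - Z \<Longrightarrow> - Z = - M"
    by (auto simp: Ball_def)
  show ?thesis
  proof (intro bexI ballI impI)
    fix Z assume "Z \<in> A" and "Z \<subseteq> M"
    then have "- Z = - M" by (intro max) auto
    then show "Z = M" by simp
  qed (rule \<open>M \<in> A\<close>)
qed

lemma ideal_in_extend:
  assumes R: "is_subring R" and P: "is_ideal_in R P" and a: "a \<in> R"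
  defines "Pa \<equiv> {p + r * a | p r. p \<in> P \<and> r \<in> R}"
  shows "is_ideal_in R Pa" and "P \<subseteq> Pa" and "a \<in> Pa"
proof -
  have "p = p + 0 * a" "a = 0 + 1 * a" for p by simp_all
  then show "P \<subseteq> Pa" and "a \<in> Pa"
    unfolding Pa_def using subring_zero[OF R] subring_one[OF R] ideal_in_zero[OF P] by blast+
  show "is_ideal_in R Pa"
    unfolding is_ideal_in_def
  proof (intro conjI ballI)
    show "Pa \<subseteq> R"
      unfolding Pa_def using ideal_in_subset[OF P] a by (blast intro: subring_add[OF R] subring_mult[OF R])
    show "0 \<in> Pa" using \<open>P \<subseteq> Pa\<close> ideal_in_zero[OF P] by blast
  next
    fix x y assume "x \<in> Pa" "y \<in> Pa"
    then obtain p r q s where "x = p + r * a" "y = q + s * a" "p \<in> P" "r \<in> R" "q \<in> P" "s \<in> R"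
      unfolding Pa_def by auto
    moreover have "x + y = (p + q) + (r + s) * a" using calculation by (simp add: algebra_simps)
    ultimately show "x + y \<in> Pa"
      unfolding Pa_def by (blast intro: ideal_in_add[OF P] subring_add[OF R])
  next
    fix t x assume "t \<in> R" and "x \<in> Pa"
    then obtain p r where "x = p + r * a" "p \<in> P" "r \<in> R" unfolding Pa_def by auto
    moreover have "t * x = t * p + (t * r) * a" using calculation by (simp add: algebra_simps)
    ultimately show "t * x \<in> Pa"
      unfolding Pa_def using \<open>t \<in> R\<close> by (blast intro: ideal_in_mult[OF P] subring_mult[OF R])
  qed
qed

lemma Union_chain_is_ideal_in:
  assumes "C \<noteq> {}" and ideal: "\<And>J. J \<in> C \<Longrightarrow> is_ideal_in R J"
    and chain: "\<And>J K. J \<in> C \<Longrightarrow> K \<in> C \<Longrightarrow> J \<subseteq> K \<or> K \<subseteq> J"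
  shows "is_ideal_in R (\<Union>C)"
  unfolding is_ideal_in_def
proof (intro conjI ballI)
  show "\<Union>C \<subseteq> R" using ideal_in_subset[OF ideal] by blast
  show "0 \<in> \<Union>C" using \<open>C \<noteq> {}\<close> ideal_in_zero[OF ideal] by blast
next
  fix a b assume "a \<in> \<Union>C" "b \<in> \<Union>C"
  then obtain J K where "J \<in> C" "K \<in> C" "a \<in> J" "b \<in> K" by auto
  with chain[of J K] have "a + b \<in> J \<or> a + b \<in> K"
    using ideal_in_add[OF ideal[of J]] ideal_in_add[OF ideal[of K]] by blast
  with \<open>J \<in> C\<close> \<open>K \<in> C\<close> show "a + b \<in> \<Union>C" by blast
next
  fix r a assume "r \<in> R" "a \<in> \<Union>C"
  then show "r * a \<in> \<Union>C" using ideal_in_mult[OF ideal] by blast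
qed

lemma Inter_chain_prime_ideal_in:
  assumes "C \<noteq> {}" and prime: "\<And>Q. Q \<in> C \<Longrightarrow> prime_ideal_in R Q"
    and chain: "\<And>J K. J \<in> C \<Longrightarrow> K \<in> C \<Longrightarrow> J \<subseteq> K \<or> K \<subseteq> J"
  shows "prime_ideal_in R (\<Inter>C)"
  unfolding prime_ideal_in_def
proof (intro conjI ballI impI)
  show "is_ideal_in R (\<Inter>C)" "1 \<notin> \<Inter>C"
    using assms(1) prime unfolding prime_ideal_in_def is_ideal_in_def by blast+
next
  fix a b assume "a \<in> R" "b \<in> R" "a * b \<in> \<Inter>C"
  show "a \<in> \<Inter>C \<or> b \<in> \<Inter>C"
  proof (rule ccontr)
    assume "\<not> (a \<in> \<Inter>C \<or> b \<in> \<Inter>C)"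
    then obtain J K where "J \<in> C" "K \<in> C" "a \<notin> J" "b \<notin> K" by auto
    with prime[of J] prime[of K] chain[of J K] \<open>a \<in> R\<close> \<open>b \<in> R\<close> \<open>a * b \<in> \<Inter>C\<close>
    show False unfolding prime_ideal_in_def by blast
  qed
qed

text \<open>Krull's argument: an ideal maximal among those avoiding the powers of g is prime.\<close>

lemma prime_ideal_avoiding_powers:
  assumes R: "is_subring R" and I: "is_ideal_in R I" and g: "g \<in> R" and avoids: "\<forall>k. g ^ k \<notin> I"
  obtains P where "prime_ideal_in R P" and "I \<subseteq> P" and "g \<notin> P"
proof -
  define A where "A = {J. is_ideal_in R J \<and> I \<subseteq> J \<and> (\<forall>k. g ^ k \<notin> J)}"
  have "\<exists>P\<in>A. \<forall>J\<in>A. P \<subseteq> J \<longrightarrow> J = P"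
  proof (rule subset_Zorn_nonempty)
    show "A \<noteq> {}" using I avoids unfolding A_def by auto
  next
    fix C assume "C \<noteq> {}" and "subset.chain A C"
    then have "C \<subseteq> A" and "\<And>J K. J \<in> C \<Longrightarrow> K \<in> C \<Longrightarrow> J \<subseteq> K \<or> K \<subseteq> J"
      unfolding subset_chain_def by auto
    then have "is_ideal_in R (\<Union>C)"
      by (intro Union_chain_is_ideal_in[OF \<open>C \<noteq> {}\<close>]) (auto simp: A_def)
    then show "\<Union>C \<in> A" using \<open>C \<noteq> {}\<close> \<open>C \<subseteq> A\<close> unfolding A_def by blast
  qed
  then obtain P where "P \<in> A" and Pmax: "\<And>J. J \<in> A \<Longrightarrow> P \<subseteq> J \<Longrightarrow> J = P" by blast
  then have P: "is_ideal_in R P" and "I \<subseteq> P" and Pg: "\<And>k. g ^ k \<notin> P"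
    unfolding A_def by auto
  have power_in_extension: "\<exists>k p r. g ^ k = p + r * a \<and> p \<in> P \<and> r \<in> R"
    if "a \<in> R" "a \<notin> P" for a
  proof (rule ccontr)
    let ?Pa = "{p + r * a | p r. p \<in> P \<and> r \<in> R}"
    note Pa = ideal_in_extend[OF R P \<open>a \<in> R\<close>]
    assume "\<nexists>k p r. g ^ k = p + r * a \<and> p \<in> P \<and> r \<in> R"
    then have "?Pa \<in> A" using Pa(1,2) \<open>I \<subseteq> P\<close> unfolding A_def by auto
    then have "?Pa = P" using Pmax Pa(2) by blast
    with Pa(3) \<open>a \<notin> P\<close> show False by blast
  qed
  have "prime_ideal_in R P" unfolding prime_ideal_in_def
  proof (intro conjI ballI impI P)
    show "1 \<notin> P" using Pg[of 0] by simp
  next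
    fix a b assume "a \<in> R" and "b \<in> R" and "a * b \<in> P"
    show "a \<in> P \<or> b \<in> P"
    proof (rule ccontr)
      assume "\<not> (a \<in> P \<or> b \<in> P)"
      with power_in_extension \<open>a \<in> R\<close> \<open>b \<in> R\<close> obtain i j p r q s where
        gi: "g ^ i = p + r * a" "p \<in> P" "r \<in> R" and gj: "g ^ j = q + s * b" "q \<in> P" "s \<in> R"
        by meson
      have "g ^ i * q \<in> P"
        using subring_power[OF R g] gj(2) by (rule ideal_in_mult[OF P])
      moreover have "(r * s) * (a * b) \<in> P"
        using subring_mult[OF R gi(3) gj(3)] \<open>a * b \<in> P\<close> by (rule ideal_in_mult[OF P])
      moreover have "(s * b) * p \<in> P"
        using subring_mult[OF R gj(3) \<open>b \<in> R\<close>] gi(2) by (rule ideal_in_mult[OF P])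
      moreover have "g ^ (i + j) = g ^ i * q + (r * s) * (a * b) + (s * b) * p"
        using gi gj by (simp add: power_add algebra_simps)
      ultimately have "g ^ (i + j) \<in> P" by (simp add: ideal_in_add[OF P])
      with Pg show False by blast
    qed
  qed
  with \<open>I \<subseteq> P\<close> Pg[of 1] show thesis by (intro that) simp_all
qed

lemma minimal_prime_below:
  assumes "prime_ideal_in R P" and "I \<subseteq> P"
  obtains Q where "minimal_prime_over R I Q" and "Q \<subseteq> P"
proof -
  define A where "A = {Q. prime_ideal_in R Q \<and> I \<subseteq> Q \<and> Q \<subseteq> P}"
  have "\<exists>Q\<in>A. \<forall>Z\<in>A. Z \<subseteq> Q \<longrightarrow> Z = Q"
  proof (rule subset_Zorn_nonempty_dual)
    show "A \<noteq> {}" using assms unfolding A_def by auto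
  next
    fix C assume "C \<noteq> {}" and "subset.chain A C"
    then have "C \<subseteq> A" and "\<And>J K. J \<in> C \<Longrightarrow> K \<in> C \<Longrightarrow> J \<subseteq> K \<or> K \<subseteq> J"
      unfolding subset_chain_def by auto
    then have "prime_ideal_in R (\<Inter>C)"
      by (intro Inter_chain_prime_ideal_in[OF \<open>C \<noteq> {}\<close>]) (auto simp: A_def)
    then show "\<Inter>C \<in> A" using \<open>C \<noteq> {}\<close> \<open>C \<subseteq> A\<close> unfolding A_def by blast
  qed
  then obtain Q where "Q \<in> A" and Qmin: "\<And>Z. Z \<in> A \<Longrightarrow> Z \<subseteq> Q \<Longrightarrow> Z = Q" by blast
  then have "prime_ideal_in R Q" "I \<subseteq> Q" "Q \<subseteq> P" unfolding A_def by auto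
  moreover have "Z = Q" if "prime_ideal_in R Z" "I \<subseteq> Z" "Z \<subseteq> Q" for Z
    using that \<open>Q \<subseteq> P\<close> by (intro Qmin) (auto simp: A_def)
  ultimately show thesis by (intro that) (auto simp: minimal_prime_over_def)
qed

lemma power_in_ideal_if_mult_avoids_minimal_primes:
  assumes R: "is_subring R" and I: "is_ideal_in R I" and g: "g \<in> R" and d: "d \<in> R"
    and gd: "g * d \<in> I" and d_avoids: "\<And>Q. minimal_prime_over R I Q \<Longrightarrow> d \<notin> Q"
  shows "\<exists>k. g ^ k \<in> I"
proof (rule ccontr)
  assume "\<nexists>k. g ^ k \<in> I"
  then obtain P where "prime_ideal_in R P" "I \<subseteq> P" "g \<notin> P"
    using prime_ideal_avoiding_powers[OF R I g] by blast
  then obtain Q where Q: "minimal_prime_over R I Q" and "Q \<subseteq> P"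
    using minimal_prime_below by blast
  then have "prime_ideal_in R Q" "g \<notin> Q" "g * d \<in> Q"
    using \<open>g \<notin> P\<close> gd unfolding minimal_prime_over_def by auto
  with g d have "g \<in> Q \<or> d \<in> Q" unfolding prime_ideal_in_def by blast
  with d_avoids[OF Q] \<open>g \<notin> Q\<close> show False by blast
qed

lemma ideal_genI: "(\<And>i. i < m \<Longrightarrow> h i \<in> R) \<Longrightarrow> (\<Sum>i<m. h i * Fs i) \<in> ideal_gen R Fs m"
  unfolding ideal_gen_def by blast

lemma ideal_gen_is_ideal:
  assumes R: "is_subring R" and F: "\<And>i. i < m \<Longrightarrow> Fs i \<in> R"
  shows "is_ideal_in R (ideal_gen R Fs m)"
  unfolding is_ideal_in_def
proof (intro conjI ballI)
  show "ideal_gen R Fs m \<subseteq> R"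
    unfolding ideal_gen_def using F by (auto intro!: subring_sum[OF R] subring_mult[OF R])
  show "0 \<in> ideal_gen R Fs m"
    using ideal_genI[of m "\<lambda>_. 0" R Fs] subring_zero[OF R] by simp
next
  fix a b assume "a \<in> ideal_gen R Fs m" "b \<in> ideal_gen R Fs m"
  then obtain h k where "a = (\<Sum>i<m. h i * Fs i)" "b = (\<Sum>i<m. k i * Fs i)"
    and "\<forall>i<m. h i \<in> R" "\<forall>i<m. k i \<in> R"
    unfolding ideal_gen_def by auto
  then show "a + b \<in> ideal_gen R Fs m"
    using ideal_genI[of m "\<lambda>i. h i + k i" R Fs]
    by (simp add: subring_add[OF R] sum.distrib algebra_simps)
next
  fix r a assume "r \<in> R" "a \<in> ideal_gen R Fs m"
  then obtain h where "a = (\<Sum>i<m. h i * Fs i)" "\<forall>i<m. h i \<in> R"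
    unfolding ideal_gen_def by auto
  then show "r * a \<in> ideal_gen R Fs m"
    using ideal_genI[of m "\<lambda>i. r * h i" R Fs] \<open>r \<in> R\<close>
    by (simp add: subring_mult[OF R] sum_distrib_left algebra_simps)
qed

lemma generator_in_ideal_gen:
  assumes R: "is_subring R" and "j < m"
  shows "Fs j \<in> ideal_gen R Fs m"
proof -
  have "(\<Sum>i<m. (if i = j then 1 else 0) * Fs i) = (\<Sum>i<m. if i = j then Fs i else 0)"
    by (rule sum.cong) simp_all
  also have "\<dots> = Fs j" using \<open>j < m\<close> by simp
  finally show ?thesis
    using ideal_genI[of m "\<lambda>i. if i = j then 1 else 0" R Fs] subring_zero[OF R] subring_one[OF R]
    by simp
qed

section \<open>Polynomials and substitution\<close>

lemma vars_add: "vars (p + q) \<subseteq> vars p \<union> vars q"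
  unfolding vars_def using keys_add[of p q] by blast

lemma vars_mult: "vars ((p::('v, 'a::comm_ring_1) mpoly) * q) \<subseteq> vars p \<union> vars q"
proof
  fix v assume "v \<in> vars (p * q)"
  then obtain mon where "mon \<in> Poly_Mapping.keys (p * q)" "v \<in> Poly_Mapping.keys mon"
    unfolding vars_def by auto
  then obtain a b where "mon = a + b" "a \<in> Poly_Mapping.keys p" "b \<in> Poly_Mapping.keys q"
    using keys_mult[of p q] by blast
  with \<open>v \<in> Poly_Mapping.keys mon\<close> keys_add[of a b] show "v \<in> vars p \<union> vars q"
    unfolding vars_def by blast
qed

lemma vars_Const: "vars (Const c) = {}"
  unfolding vars_def Const_def by auto

lemma Const_one: "Const 1 = 1"
  unfolding Const_def by simp

lemma Const_in_polys_in: "Const c \<in> polys_in V"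
  unfolding polys_in_def by (simp add: vars_Const)

lemma Var_in_polys_in: "i \<in> V \<Longrightarrow> (Var i :: ('v, 'a::comm_ring_1) mpoly) \<in> polys_in V"
  unfolding polys_in_def vars_def Var_def by auto

lemma polys_in_is_subring: "is_subring (polys_in V :: ('v, 'a::comm_ring_1) mpoly set)"
proof -
  have "vars (0 :: ('v, 'a) mpoly) = {}" "vars (1 :: ('v, 'a) mpoly) = {}"
    using vars_Const[of "0::'a"] vars_Const[of "1::'a"] by (simp_all add: Const_def)
  moreover have "vars (- p) = vars p" for p :: "('v, 'a) mpoly"
    unfolding vars_def by simp
  moreover have "vars (p + q) \<subseteq> V" "vars (p * q) \<subseteq> V"
    if "vars p \<subseteq> V" "vars q \<subseteq> V" for p q :: "('v, 'a) mpoly"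
    using vars_add[of p q] vars_mult[of p q] that by blast+
  ultimately show ?thesis unfolding is_subring_def polys_in_def by simp
qed

lemma map_coeffs_in_polys_in:
  assumes "p \<in> polys_in V" and "f 0 = 0"
  shows "map_coeffs f p \<in> polys_in V"
proof -
  have "Poly_Mapping.keys (map_coeffs f p) \<subseteq> Poly_Mapping.keys p"
    unfolding map_coeffs_def by (auto simp: in_keys_iff map.rep_eq when_def)
  then show ?thesis using assms unfolding polys_in_def vars_def by auto
qed

lemma subst_Const: "subst \<sigma> (Const c) = Const c"
  unfolding subst_def Const_def by (cases "c = 0") simp_all

lemma Const_mult: "Const a * Const b = Const (a * b)"
  unfolding Const_def by (simp add: mult_single)

lemma subst_in_subring:
  assumes R: "is_subring R" and Const: "\<And>c. Const c \<in> R"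
    and \<sigma>: "\<And>v. v \<in> vars p \<Longrightarrow> \<sigma> v \<in> R"
  shows "subst \<sigma> p \<in> R"
  unfolding subst_def
proof (rule subring_sum[OF R])
  fix mon assume mon: "mon \<in> Poly_Mapping.keys p"
  have "(\<Prod>v\<in>Poly_Mapping.keys mon. \<sigma> v ^ Poly_Mapping.lookup mon v) \<in> R"
    using mon \<sigma> by (auto intro!: subring_prod[OF R] subring_power[OF R] simp: vars_def)
  then show "Const (Poly_Mapping.lookup p mon) *
      (\<Prod>v\<in>Poly_Mapping.keys mon. \<sigma> v ^ Poly_Mapping.lookup mon v) \<in> R"
    by (rule subring_mult[OF R Const])
qed

lemma subst_diff_in_ideal:
  assumes R: "is_subring R" and I: "is_ideal_in R I" and Const: "\<And>c. Const c \<in> R"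
    and \<sigma>\<tau>: "\<And>v. v \<in> vars p \<Longrightarrow> \<sigma> v \<in> R \<and> \<tau> v \<in> R \<and> \<sigma> v - \<tau> v \<in> I"
  shows "subst \<sigma> p - subst \<tau> p \<in> I"
proof -
  let ?mon = "\<lambda>\<sigma> mon. \<Prod>v\<in>Poly_Mapping.keys mon. \<sigma> v ^ Poly_Mapping.lookup mon v"
  have "subst \<sigma> p - subst \<tau> p =
      (\<Sum>mon\<in>Poly_Mapping.keys p. Const (Poly_Mapping.lookup p mon) * (?mon \<sigma> mon - ?mon \<tau> mon))"
    unfolding subst_def by (simp add: sum_subtractf algebra_simps)
  also have "\<dots> \<in> I"
  proof (rule ideal_sum[OF I])
    fix mon assume mon: "mon \<in> Poly_Mapping.keys p"
    have "?mon \<sigma> mon - ?mon \<tau> mon \<in> I"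
    proof (rule ideal_prod_diff[OF R I])
      fix v assume "v \<in> Poly_Mapping.keys mon"
      with mon have "v \<in> vars p" unfolding vars_def by blast
      with \<sigma>\<tau> show "\<sigma> v ^ Poly_Mapping.lookup mon v \<in> R \<and> \<tau> v ^ Poly_Mapping.lookup mon v \<in> R \<and>
          \<sigma> v ^ Poly_Mapping.lookup mon v - \<tau> v ^ Poly_Mapping.lookup mon v \<in> I"
        by (simp add: subring_power[OF R] ideal_power_diff[OF R I])
    qed
    then show "Const (Poly_Mapping.lookup p mon) * (?mon \<sigma> mon - ?mon \<tau> mon) \<in> I"
      by (rule ideal_in_mult[OF I Const])
  qed
  finally show ?thesis .
qed

abbreviation inst_placeholders :: "(nat \<Rightarrow> (nat, 'a::{zero,one}) mpoly) \<Rightarrow> nat + nat \<Rightarrow> (nat, 'a) mpoly" where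
  "inst_placeholders F \<equiv> \<lambda>v. case v of Inl i \<Rightarrow> Var i | Inr j \<Rightarrow> F j"

lemma subst_placeholders_in_ideal_gen:
  fixes C :: "(nat + nat, 'a::comm_ring_1) mpoly"
  assumes F: "\<And>i. i < m \<Longrightarrow> F i \<in> polys_in {..<n}"
    and C: "C \<in> polys_in (Inl ` {..<n} \<union> Inr ` {..<m})"
    and C0: "subst (inst_placeholders (\<lambda>_. 0)) C = 0"
  shows "subst (inst_placeholders F) C \<in> ideal_gen (polys_in {..<n}) F m"
proof -
  let ?R = "polys_in {..<n} :: (nat, 'a) mpoly set"
  note R = polys_in_is_subring[of "{..<n}"]
  have I: "is_ideal_in ?R (ideal_gen ?R F m)" using R F by (rule ideal_gen_is_ideal)
  have "subst (inst_placeholders F) C - subst (inst_placeholders (\<lambda>_. 0)) C \<in> ideal_gen ?R F m"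
  proof (rule subst_diff_in_ideal[OF R I Const_in_polys_in])
    fix v assume "v \<in> vars C"
    then have "v \<in> Inl ` {..<n} \<union> Inr ` {..<m}" using C unfolding polys_in_def by auto
    then show "inst_placeholders F v \<in> ?R \<and> inst_placeholders (\<lambda>_. 0) v \<in> ?R \<and>
        inst_placeholders F v - inst_placeholders (\<lambda>_. 0) v \<in> ideal_gen ?R F m"
      using F generator_in_ideal_gen[OF R] ideal_in_zero[OF I] subring_zero[OF R]
      by (auto simp: Var_in_polys_in)
  qed
  with C0 show ?thesis by simp
qed

section \<open>RIPS certificates\<close>

lemma unit_notin_prime_ideal:
  assumes "prime_ideal_in R P" and "v \<in> R" and "v * u = 1"
  shows "u \<notin> P"
  using assms unfolding prime_ideal_in_def is_ideal_in_def by force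

lemma RIPS_certificate_denominator_in_polys_in:
  assumes "RIPS_certificate n m F G C' D" and "\<And>i. i < m \<Longrightarrow> F i \<in> polys_in {..<n}"
  shows "subst (inst_placeholders F) D \<in> polys_in {..<n}"
proof (rule subst_in_subring[OF polys_in_is_subring Const_in_polys_in])
  fix v assume "v \<in> vars D"
  then have "v \<in> Inl ` {..<n} \<union> Inr ` {..<m}"
    using assms(1) unfolding RIPS_certificate_def Let_def polys_in_def by auto
  then show "inst_placeholders F v \<in> polys_in {..<n}"
    using assms(2) by (auto intro: Var_in_polys_in)
qed

lemma RIPS_certificate_mult_in_ideal_gen:
  assumes "RIPS_certificate n m F G C' D" and "\<And>i. i < m \<Longrightarrow> F i \<in> polys_in {..<n}"
  shows "G * subst (inst_placeholders F) D \<in> ideal_gen (polys_in {..<n}) F m"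
proof -
  have "C' \<in> polys_in (Inl ` {..<n} \<union> Inr ` {..<m})"
    and "subst (inst_placeholders (\<lambda>_. 0)) C' = 0"
    and eq: "subst (inst_placeholders F) C' = G * subst (inst_placeholders F) D"
    using assms(1) unfolding RIPS_certificate_def Let_def by auto
  with assms(2) have "subst (inst_placeholders F) C' \<in> ideal_gen (polys_in {..<n}) F m"
    by (intro subst_placeholders_in_ideal_gen)
  with eq show ?thesis by simp
qed

text \<open>In the constant case, condition (0) makes D a nonzero constant, i.e. a unit.\<close>

lemma RIPS_certificate_denominator_avoids_minimal_primes:
  assumes "RIPS_certificate n m F G C' D"
    and "minimal_prime_over (polys_in {..<n}) (ideal_gen (polys_in {..<n}) F m) Q"
  shows "subst (inst_placeholders F) D \<notin> Q"
proof (cases "nonzero_const G")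
  case False
  with assms show ?thesis unfolding RIPS_certificate_def Let_def by auto
next
  case True
  then obtain c where "c \<noteq> 0" and "D = Const c"
    using assms(1) unfolding RIPS_certificate_def Let_def nonzero_const_def by auto
  then have "Const (inverse c) * subst (inst_placeholders F) D = 1"
    by (simp add: subst_Const Const_mult Const_one)
  moreover have "prime_ideal_in (polys_in {..<n}) Q"
    using assms(2) unfolding minimal_prime_over_def by blast
  ultimately show ?thesis by (intro unit_notin_prime_ideal[OF _ Const_in_polys_in])
qed

theorem propositionB3:
  fixes n m :: nat
    and F :: "nat \<Rightarrow> (nat, 'a::field) mpoly"
    and G :: "(nat, 'a) mpoly"
  assumes "G \<in> polys_in {..<n}"
    and "\<forall>i<m. F i \<in> polys_in {..<n}"
    and "\<exists>C' D. RIPS_certificate n m (\<lambda>i. map_coeffs to_ac (F i)) (map_coeffs to_ac G) C' D"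
  shows "in_radical (polys_in {..<n}) (\<lambda>i. map_coeffs to_ac (F i)) m (map_coeffs to_ac G)"
proof -
  let ?R = "polys_in {..<n} :: (nat, 'a alg_closure) mpoly set"
  let ?F = "\<lambda>i. map_coeffs to_ac (F i)"
  let ?G = "map_coeffs to_ac G"
  obtain C' D where cert: "RIPS_certificate n m ?F ?G C' D" using assms(3) by blast
  have F: "\<And>i. i < m \<Longrightarrow> ?F i \<in> ?R" and G: "?G \<in> ?R"
    using assms(1,2) by (simp_all add: map_coeffs_in_polys_in)
  have "\<exists>k. ?G ^ k \<in> ideal_gen ?R ?F m"
  proof (rule power_in_ideal_if_mult_avoids_minimal_primes)
    show "is_subring ?R" by (rule polys_in_is_subring)
    show "is_ideal_in ?R (ideal_gen ?R ?F m)" by (rule ideal_gen_is_ideal[OF polys_in_is_subring F])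
    show "?G \<in> ?R" by (rule G)
    show "subst (inst_placeholders ?F) D \<in> ?R"
      using cert F by (rule RIPS_certificate_denominator_in_polys_in)
    show "?G * subst (inst_placeholders ?F) D \<in> ideal_gen ?R ?F m"
      using cert F by (rule RIPS_certificate_mult_in_ideal_gen)
    show "subst (inst_placeholders ?F) D \<notin> Q" if "minimal_prime_over ?R (ideal_gen ?R ?F m) Q" for Q
      using cert that by (rule RIPS_certificate_denominator_avoids_minimal_primes)
  qed
  then show ?thesis unfolding in_radical_def .
qed

end
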